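(* Let $M$ be a system execution satisfying the Lazy Set axioms A0, A1, A2. For every event $x$ with $\mathrm{Op}^1(x)$ there is no event $y$ with $\mathrm{Op}^0(y)$ such that $\mathrm{val}(y)=\mathrm{val}(x)$ and $\gamma(x)<y<x$.
   Context: A system execution $M$ consists of: a set of events, partitioned into low-level events (actions) and high-level events; unary predicates $\mathrm{Add},\mathrm{Rem},\mathrm{Cnt}$ on events; a partial order $<$ on events in which every event has finitely many predecessors (and Lamport's finiteness property: for every event $x$ there is a finite set $E$ with $x<y$ for all events $y\notin E$); functions $\mathrm{Begin},\mathrm{End}$ from events to actions with $\mathrm{Begin}(e)=\mathrm{End}(e)=e$ for actions $e$; functions $\chi$ (events $\to\{0,1,f\}$), $\mathrm{val}$ (events $\to\mathbb N$), $\gamma$ (events $\to$ events). For events $X,Y$, $X<Y$ iff $\mathrm{End}(X)<\mathrm{Begin}(Y)$. Notation: $\mathrm{Add}^p(a)$ abbreviates $\mathrm{Add}(a)\wedge\chi(a)=p$, similarly $\mathrm{Rem}^p,\mathrm{Cnt}^p$; $\mathrm{Op}^p(a)$ abbreviates $(\mathrm{Add}(a)\vee\mathrm{Rem}(a)\vee\mathrm{Cnt}(a))\wedge\chi(a)=p$ for $p\in\{0,1\}$. A0: $\mathrm{Add},\mathrm{Rem},\mathrm{Cnt}$ pairwise disjoint; $\mathrm{Add},\mathrm{Rem}$ events are actions, $\mathrm{Cnt}$ events are high-level; $\mathrm{Begin}(X),\mathrm{End}(X)$ are actions; for $\mathrm{Cnt}$ events $E$, $\mathrm{Begin}(E)<\mathrm{End}(E)$;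 $<$ restricted to actions is linear. A1: for every $A$ with $\mathrm{Op}^1(A)$: $\mathrm{Add}^0(\gamma(A))$, $\mathrm{val}(\gamma(A))=\mathrm{val}(A)$, $\gamma(A)<\mathrm{End}(A)$, and no $R$ has $\mathrm{Rem}^1(R)$, $\gamma(R)=\gamma(A)$, $\gamma(A)<R<A$. A2: if $\mathrm{Op}^0(B)$, $\mathrm{Add}^0(A)$, $A<B$, $\mathrm{val}(A)=\mathrm{val}(B)$, then some $R$ has $\mathrm{Rem}^1(R)$, $A=\gamma(R)$, $R<\mathrm{End}(B)$. *)

theory Defs
  imports Main
begin

datatype chival = C0 | C1 | Cf

record 'e sysexec =
  events  :: "'e set"
  actions :: "'e set"
  Add   :: "'e \<Rightarrow> bool"
  Rem   :: "'e \<Rightarrow> bool"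
  Cnt   :: "'e \<Rightarrow> bool"
  lt    :: "'e \<Rightarrow> 'e \<Rightarrow> bool"
  Begin :: "'e \<Rightarrow> 'e"
  End   :: "'e \<Rightarrow> 'e"
  chi   :: "'e \<Rightarrow> chival"
  val   :: "'e \<Rightarrow> nat"
  gamma :: "'e \<Rightarrow> 'e"

definition system_execution :: "'e sysexec \<Rightarrow> bool" where
  "system_execution M \<longleftrightarrow>
     actions M \<subseteq> events M \<and>
     (\<forall>x\<in>events M. \<not> lt M x x) \<and>
     (\<forall>x\<in>events M. \<forall>y\<in>events M. \<forall>z\<in>events M. lt M x y \<longrightarrow> lt M y z \<longrightarrow> lt M x z) \<and>
     (\<forall>x\<in>events M. finite {y\<in>events M. lt M y x}) \<and>
     (\<forall>x\<in>events M. \<exists>F. finite F \<and> (\<forall>y\<in>events M - F. lt M x y)) \<and>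
     (\<forall>x\<in>events M. Begin M x \<in> actions M \<and> End M x \<in> actions M) \<and>
     (\<forall>e\<in>actions M. Begin M e = e \<and> End M e = e) \<and>
     (\<forall>x\<in>events M. gamma M x \<in> events M) \<and>
     (\<forall>X\<in>events M. \<forall>Y\<in>events M. lt M X Y \<longleftrightarrow> lt M (End M X) (Begin M Y))"

definition AddP :: "'e sysexec \<Rightarrow> chival \<Rightarrow> 'e \<Rightarrow> bool" where
  "AddP M p a \<longleftrightarrow> Add M a \<and> chi M a = p"
definition RemP :: "'e sysexec \<Rightarrow> chival \<Rightarrow> 'e \<Rightarrow> bool" where
  "RemP M p a \<longleftrightarrow> Rem M a \<and> chi M a = p"
definition OpP :: "'e sysexec \<Rightarrow> chival \<Rightarrow> 'e \<Rightarrow> bool" where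
  "OpP M p a \<longleftrightarrow> (Add M a \<or> Rem M a \<or> Cnt M a) \<and> chi M a = p"

definition A0 :: "'e sysexec \<Rightarrow> bool" where
  "A0 M \<longleftrightarrow>
     (\<forall>x\<in>events M. \<not> (Add M x \<and> Rem M x) \<and> \<not> (Add M x \<and> Cnt M x) \<and> \<not> (Rem M x \<and> Cnt M x)) \<and>
     (\<forall>x\<in>events M. Add M x \<longrightarrow> x \<in> actions M) \<and>
     (\<forall>x\<in>events M. Rem M x \<longrightarrow> x \<in> actions M) \<and>
     (\<forall>x\<in>events M. Cnt M x \<longrightarrow> x \<notin> actions M) \<and>
     (\<forall>x\<in>events M. Begin M x \<in> actions M \<and> End M x \<in> actions M) \<and>
     (\<forall>x\<in>events M. Cnt M x \<longrightarrow> lt M (Begin M x) (End M x)) \<and>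
     (\<forall>a\<in>actions M. \<forall>b\<in>actions M. a \<noteq> b \<longrightarrow> lt M a b \<or> lt M b a)"

definition A1 :: "'e sysexec \<Rightarrow> bool" where
  "A1 M \<longleftrightarrow> (\<forall>a\<in>events M. OpP M C1 a \<longrightarrow>
     AddP M C0 (gamma M a) \<and> val M (gamma M a) = val M a \<and>
     lt M (gamma M a) (End M a) \<and>
     \<not> (\<exists>r\<in>events M. RemP M C1 r \<and> gamma M r = gamma M a \<and>
            lt M (gamma M a) r \<and> lt M r a))"

definition A2 :: "'e sysexec \<Rightarrow> bool" where
  "A2 M \<longleftrightarrow> (\<forall>a\<in>events M. \<forall>b\<in>events M.
     OpP M C0 b \<and> AddP M C0 a \<and> lt M a b \<and> val M a = val M b \<longrightarrow>
     (\<exists>r\<in>events M. RemP M C1 r \<and> a = gamma M r \<and> lt M r (End M b)))"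

end

theory Submission
  imports Defs
begin

text \<open>Suppose \<open>y\<close> is an \<open>Op\<^sup>0\<close> with the value of \<open>x\<close> and \<open>\<gamma>(x) < y < x\<close>. Since \<open>\<gamma>(x)\<close> is an
  \<open>Add\<^sup>0\<close> of that value, A2 yields a \<open>Rem\<^sup>1\<close> action \<open>r\<close> with \<open>\<gamma>(r) = \<gamma>(x)\<close> and \<open>r < End(y)\<close>,
  hence \<open>r < x\<close>. Applied to \<open>r\<close>, A1 gives \<open>\<gamma>(x) < r\<close>. So \<open>r\<close> is a successful removal of
  \<open>\<gamma>(x)\<close> strictly between \<open>\<gamma>(x)\<close> and \<open>x\<close>, which A1 applied to \<open>x\<close> forbids.\<close>

lemma system_execution_lt_action_iff:
  assumes "system_execution M" and "r \<in> actions M" and "x \<in> events M"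
  shows "lt M r x \<longleftrightarrow> lt M r (Begin M x)"
  using assms unfolding system_execution_def by (metis subsetD)

lemma system_execution_lt_trans_End:
  assumes M: "system_execution M" and "r \<in> actions M"
    and "y \<in> events M" and "x \<in> events M"
    and "lt M r (End M y)" and "lt M y x"
  shows "lt M r x"
proof -
  have acts: "End M y \<in> actions M" "Begin M x \<in> actions M" "actions M \<subseteq> events M"
    using M assms(3,4) unfolding system_execution_def by blast+
  have "lt M (End M y) (Begin M x)"
    using M assms(3,4,6) unfolding system_execution_def by blast
  with assms(5) have "lt M r (Begin M x)"
    using M assms(2) acts unfolding system_execution_def by blast
  then show ?thesis
    using system_execution_lt_action_iff[OF M assms(2,4)] by simp
qed

lemma A0_RemP_action:
  assumes "A0 M" and "r \<in> events M" and "RemP M p r"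
  shows "r \<in> actions M"
  using assms unfolding A0_def RemP_def by blast

lemma A1_gamma_lt_action:
  assumes M: "system_execution M" and "A1 M" and "a \<in> actions M" and "OpP M C1 a"
  shows "lt M (gamma M a) a"
proof -
  have "a \<in> events M" "End M a = a"
    using M assms(3) unfolding system_execution_def by blast+
  then show ?thesis
    using assms(2,4) unfolding A1_def by metis
qed

lemma A1_gamma_AddP_same_val:
  assumes "A1 M" and "a \<in> events M" and "OpP M C1 a"
  shows "AddP M C0 (gamma M a)" and "val M (gamma M a) = val M a"
  using assms unfolding A1_def by blast+

lemma A1_no_Rem_between:
  assumes "A1 M" and "a \<in> events M" and "OpP M C1 a"
    and "r \<in> events M" and "RemP M C1 r" and "gamma M r = gamma M a"
    and "lt M (gamma M a) r"
  shows "\<not> lt M r a"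
  using assms unfolding A1_def by blast

lemma A2_obtain_Rem:
  assumes "A2 M" and "a \<in> events M" and "b \<in> events M"
    and "OpP M C0 b" and "AddP M C0 a" and "lt M a b" and "val M a = val M b"
  obtains r where "r \<in> events M" "RemP M C1 r" "gamma M r = a" "lt M r (End M b)"
  using assms unfolding A2_def by metis

theorem lemma3p4:
  fixes M :: "'e sysexec"
  assumes "system_execution M" and "A0 M" and "A1 M" and "A2 M"
    and "x \<in> events M" and "OpP M C1 x"
  shows "\<not> (\<exists>y\<in>events M. OpP M C0 y \<and> val M y = val M x \<and>
                lt M (gamma M x) y \<and> lt M y x)"
proof
  assume "\<exists>y\<in>events M. OpP M C0 y \<and> val M y = val M x \<and> lt M (gamma M x) y \<and> lt M y x"
  then obtain y where y: "y \<in> events M" "OpP M C0 y" "val M y = val M x"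
    "lt M (gamma M x) y" "lt M y x" by blast
  have gx: "gamma M x \<in> events M"
    using assms(1,5) unfolding system_execution_def by blast
  obtain r where r: "r \<in> events M" "RemP M C1 r" "gamma M r = gamma M x" "lt M r (End M y)"
    using A2_obtain_Rem[OF assms(4) gx y(1,2)] A1_gamma_AddP_same_val[OF assms(3,5,6)] y(3,4)
    by metis
  have r_act: "r \<in> actions M"
    using A0_RemP_action[OF assms(2) r(1,2)] .
  have "lt M (gamma M x) r"
    using A1_gamma_lt_action[OF assms(1,3) r_act] r(2,3) unfolding RemP_def OpP_def by simp
  moreover have "lt M r x"
    using system_execution_lt_trans_End[OF assms(1) r_act y(1) assms(5) r(4) y(5)] .
  ultimately show False
    using A1_no_Rem_between[OF assms(3,5,6) r(1,2,3)] by blast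
qed

end
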